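(* Let $C=\langle A,G\rangle$ be a contract over a fixed vector of typed state variables $\vec{s}$ and a fixed vector of typed input variables $\vec{i}$, with assumption $A=\langle A_I,A_T\rangle$ and guarantee $G=\langle G_I,G_T\rangle$. Then $C$ is realizable if and only if \[ \forall \vec{i}.\; A_I[\vec{i}] \Rightarrow \exists \vec{s}.\; \big(G_I[\vec{s},\vec{i}] \land \mathit{Viable}_C(\vec{s})\big). \]
   Context: Fix a vector $\vec{s}$ of typed state variables and a vector $\vec{i}$ of typed input variables; a state is a type-consistent valuation of $\vec{s}$ and an input is a type-consistent valuation of $\vec{i}$. Primed vectors $\vec{s}',\vec{i}'$ denote renamed copies used for next-step values. Predicates are formulas over the indicated variables, interpreted as relations on valuations. A transition system $S=\langle \vec{s},\vec{i},I,T\rangle$ consists of an initial predicate $I[\vec{s},\vec{i}]$ and a transition predicate $T[\vec{s},\vec{i}',\vec{s}']$. A contract is a pair $C=\langle A,G\rangle$ with: - an assumption $A=\langle A_I,A_T\rangle$, where $A_I[\vec{i}]$ is a predicate over the inputs and $A_T[\vec{s},\vec{i}']$ is a predicate over the current state and the next inputs; - a guarantee $G=\langle G_I,G_T\rangle$, where $G_I[\vec{s},\vec{i}]$ and $G_T[\vec{s},\vec{i}',\vec{s}']$ are predicates. In particular, $G$ is itself a transition system with the same state and input variables. Reachable states under an assumption: for a transition system $S=\langle \vec{s},\vec{i},I,T\rangle$ and an assumption $A$, the set $\mathit{Reachable}_{S,A}$ is the least set of states such that: - every state $\vec{s}$ for which there is an input $\vec{i}_0$ with $A_I[\vec{i}_0]\land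 I[\vec{s},\vec{i}_0]$ belongs to it; and - whenever $\vec{s}_p\in\mathit{Reachable}_{S,A}$ and $A_T[\vec{s}_p,\vec{i}']\land T[\vec{s}_p,\vec{i}',\vec{s}]$ hold, then $\vec{s}\in\mathit{Reachable}_{S,A}$. $S$ satisfies $C$ if both of the following hold: 1. $\forall\vec{s},\vec{i}.\; A_I[\vec{i}]\land I[\vec{s},\vec{i}]\Rightarrow G_I[\vec{s},\vec{i}]$; 2. $\forall \vec{s},\vec{i}',\vec{s}'.\; \mathit{Reachable}_{S,A}(\vec{s})\land A_T[\vec{s},\vec{i}']\land T[\vec{s},\vec{i}',\vec{s}']\Rightarrow G_T[\vec{s},\vec{i}',\vec{s}']$. $S$ is input-enabled under $A$ if both of the following hold: 1. $\forall\vec{i}.\; A_I[\vec{i}]\Rightarrow\exists\vec{s}.\, I[\vec{s},\vec{i}]$; 2. $\forall\vec{s},\vec{i}'.\; \mathit{Reachable}_{S,A}(\vec{s})\land A_T[\vec{s},\vec{i}']\Rightarrow\exists\vec{s}'.\,T[\vec{s},\vec{i}',\vec{s}']$. $S$ is a realization of $C$ if $S$ satisfies $C$ and is input-enabled under $A$. The contract $C$ is realizable if there exists a transition system over the same state variables $\vec{s}$ and input variables $\vec{i}$ that is a realization of $C$. Viable states: $\mathit{Viable}_C$ is the greatest (coinductively defined) set of states satisfying \[ \mathit{Viable}_C(\vec{s}) \iff \forall \vec{i}'.\; A_T[\vec{s},\vec{i}']\Rightarrow \exists \vec{s}'.\; G_T[\vec{s},\vec{i}',\vec{s}']\land \mathit{Viable}_C(\vec{s}').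 \] Informally, these are the states from which $G_T$ can keep responding to valid inputs forever. *)

theory Defs
  imports Main
begin

(* States are values of type 's (valuations of the state vector),
   inputs are values of type 'i (valuations of the input vector). *)

record ('s, 'i) transition_system =
  init :: "'s \<Rightarrow> 'i \<Rightarrow> bool"
  trans :: "'s \<Rightarrow> 'i \<Rightarrow> 's \<Rightarrow> bool"

record ('s, 'i) assumption =
  A_I :: "'i \<Rightarrow> bool"
  A_T :: "'s \<Rightarrow> 'i \<Rightarrow> bool"

record ('s, 'i) contract =
  assm :: "('s, 'i) assumption"
  guar :: "('s, 'i) transition_system"

inductive Reachable :: "('s, 'i) transition_system \<Rightarrow> ('s, 'i) assumption \<Rightarrow> 's \<Rightarrow> bool"
  for S A where
  base: "A_I A i0 \<Longrightarrow> init S s i0 \<Longrightarrow> Reachable S A s"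
| step: "Reachable S A sp \<Longrightarrow> A_T A sp i' \<Longrightarrow> trans S sp i' s \<Longrightarrow> Reachable S A s"

definition satisfies :: "('s, 'i) transition_system \<Rightarrow> ('s, 'i) contract \<Rightarrow> bool" where
  "satisfies S C \<longleftrightarrow>
     (\<forall>s i. A_I (assm C) i \<and> init S s i \<longrightarrow> init (guar C) s i) \<and>
     (\<forall>s i' s'. Reachable S (assm C) s \<and> A_T (assm C) s i' \<and> trans S s i' s'
                \<longrightarrow> trans (guar C) s i' s')"

definition input_enabled :: "('s, 'i) transition_system \<Rightarrow> ('s, 'i) assumption \<Rightarrow> bool" where
  "input_enabled S A \<longleftrightarrow>
     (\<forall>i. A_I A i \<longrightarrow> (\<exists>s. init S s i)) \<and>
     (\<forall>s i'. Reachable S A s \<and> A_T A s i' \<longrightarrow> (\<exists>s'. trans S s i' s'))"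

definition realization :: "('s, 'i) transition_system \<Rightarrow> ('s, 'i) contract \<Rightarrow> bool" where
  "realization S C \<longleftrightarrow> satisfies S C \<and> input_enabled S (assm C)"

definition realizable :: "('s, 'i) contract \<Rightarrow> bool" where
  "realizable C \<longleftrightarrow> (\<exists>S :: ('s, 'i) transition_system. realization S C)"

coinductive Viable :: "('s, 'i) contract \<Rightarrow> 's \<Rightarrow> bool" for C where
  "(\<And>i'. A_T (assm C) s i' \<Longrightarrow> \<exists>s'. trans (guar C) s i' s' \<and> Viable C s') \<Longrightarrow> Viable C s"

end

theory Submission
  imports Defs
begin

(* Necessity: every state reachable in a realization is viable, since input-enabledness
   supplies a response to each valid input and satisfaction makes it a G_T-step to a
   reachable state; so the reachable states form a post-fixed point of the Viable
   functor. Sufficiency: restrict G to viable states. Every viable state has a G_T-step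
   to a viable state for each valid input, so this restriction is input-enabled, and it
   satisfies C trivially since its steps are G-steps. *)

lemma realization_Reachable_Viable:
  assumes R: "realization S C" and "Reachable S (assm C) s"
  shows "Viable C s"
  using assms(2)
proof (coinduct rule: Viable.coinduct)
  case (Viable s)
  have "\<exists>s'. trans (guar C) s i' s' \<and> (Reachable S (assm C) s' \<or> Viable C s')"
    if A: "A_T (assm C) s i'" for i'
  proof -
    from R Viable A obtain s' where step: "trans S s i' s'"
      unfolding realization_def input_enabled_def by blast
    with R Viable A have "trans (guar C) s i' s'"
      unfolding realization_def satisfies_def by blast
    with Reachable.step[OF Viable A step] show ?thesis by blast
  qed
  then show ?case by blast
qed

lemma realization_init_Viable:
  assumes R: "realization S C" and A: "A_I (assm C) i"
  obtains s where "init (guar C) s i" and "Viable C s"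
proof -
  from R A obtain s where "init S s i"
    unfolding realization_def input_enabled_def by blast
  with R A show thesis
    using that realization_Reachable_Viable[OF R Reachable.base[OF A]]
    unfolding realization_def satisfies_def by blast
qed

definition viable_restriction :: "('s, 'i) contract \<Rightarrow> ('s, 'i) transition_system" where
  "viable_restriction C =
     \<lparr>init = (\<lambda>s i. init (guar C) s i \<and> Viable C s),
      trans = (\<lambda>s i s'. trans (guar C) s i s' \<and> Viable C s')\<rparr>"

lemma Reachable_viable_restriction_Viable:
  "Reachable (viable_restriction C) A s \<Longrightarrow> Viable C s"
  by (induction rule: Reachable.induct) (auto simp: viable_restriction_def)

lemma realization_viable_restriction:
  assumes "\<forall>i. A_I (assm C) i \<longrightarrow> (\<exists>s. init (guar C) s i \<and> Viable C s)"
  shows "realization (viable_restriction C) C"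
  unfolding realization_def satisfies_def input_enabled_def
proof (intro conjI allI impI)
  fix s i'
  assume "Reachable (viable_restriction C) (assm C) s \<and> A_T (assm C) s i'"
  then have "Viable C s" and "A_T (assm C) s i'"
    using Reachable_viable_restriction_Viable by auto
  then show "\<exists>s'. trans (viable_restriction C) s i' s'"
    by (cases rule: Viable.cases) (auto simp: viable_restriction_def)
qed (use assms in \<open>auto simp: viable_restriction_def\<close>)

theorem theorem1:
  fixes C :: "('s, 'i) contract"
  shows "realizable C \<longleftrightarrow>
           (\<forall>i. A_I (assm C) i \<longrightarrow> (\<exists>s. init (guar C) s i \<and> Viable C s))"
proof
  assume "realizable C"
  then obtain S :: "('s, 'i) transition_system" where "realization S C"
    unfolding realizable_def by blast
  then show "\<forall>i. A_I (assm C) i \<longrightarrow> (\<exists>s. init (guar C) s i \<and> Viable C s)"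
    by (metis realization_init_Viable)
next
  assume "\<forall>i. A_I (assm C) i \<longrightarrow> (\<exists>s. init (guar C) s i \<and> Viable C s)"
  then show "realizable C"
    unfolding realizable_def by (blast intro: realization_viable_restriction)
qed

end
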